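(* Let $G$ be a finite abelian group with dual group $\widehat G$, and let $F=(F(s,\sigma))_{s\in G,\sigma\in\widehat G}$ be its Fourier matrix, a unitary matrix whose columns $F(\cdot,\sigma)$ are the normalized characters, so that $|F(s,\sigma)|^2=1/|G|$ for all $s,\sigma$. Let $S\subseteq G$ and $\Sigma\subseteq\widehat G$ be symmetric subsets ($S=-S$, $\Sigma=\Sigma^{-1}$) with $|S|\ge|\Sigma|$. Let $P$ be the orthogonal projection of $\ell^2(G)$ onto $\mathrm{span}\{F(\cdot,\sigma):\sigma\in\Sigma\}$ and let $(Qf)(s)=\mathbbm{1}_S(s)f(s)$. Suppose $\mu_1\ge\mu_2\ge\cdots\ge\mu_{|\Sigma|}$ are the nonzero eigenvalues of $PQ$, with corresponding orthonormal eigenvectors $\varphi_1,\dots,\varphi_{|\Sigma|}$. Then for every $\sigma\in\widehat G$, $\sum_{\nu=1}^{|\Sigma|}\mu_\nu|F\varphi_\nu(\sigma)|^2=\frac{|S|}{|G|}\mathbbm{1}_\Sigma(\sigma),$ where $F\varphi(\sigma)=\sum_{s\in G}\varphi(s)\overline{F(s,\sigma)}$.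
   Context: $\ell^2(G)$ is the space of complex functions on $G$ with the standard inner product. $\mathbbm{1}_A$ denotes the indicator function of a set $A$. *)

theory Defs
  imports Complex_Main
begin

definition l2_inner :: "('a::finite \<Rightarrow> complex) \<Rightarrow> ('a \<Rightarrow> complex) \<Rightarrow> complex" where
  "l2_inner f g = (\<Sum>s\<in>UNIV. f s * cnj (g s))"

definition character :: "('a::ab_group_add \<Rightarrow> complex) \<Rightarrow> bool" where
  "character \<chi> \<longleftrightarrow> (\<forall>x. cmod (\<chi> x) = 1) \<and> (\<forall>x y. \<chi> (x + y) = \<chi> x * \<chi> y)"

definition dual_group :: "('a::ab_group_add \<Rightarrow> complex) set" where
  "dual_group = {\<chi>. character \<chi>}"

definition dual_inv :: "('a \<Rightarrow> complex) \<Rightarrow> ('a \<Rightarrow> complex)" where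
  "dual_inv \<chi> = (\<lambda>x. inverse (\<chi> x))"

definition fourier :: "'a::{ab_group_add,finite} \<Rightarrow> ('a \<Rightarrow> complex) \<Rightarrow> complex" where
  "fourier s \<sigma> = \<sigma> s / complex_of_real (sqrt (real (card (UNIV::'a set))))"

definition fourier_transform :: "('a::{ab_group_add,finite} \<Rightarrow> complex) \<Rightarrow> ('a \<Rightarrow> complex) \<Rightarrow> complex" where
  "fourier_transform \<phi> \<sigma> = (\<Sum>s\<in>UNIV. \<phi> s * cnj (fourier s \<sigma>))"

definition col_span :: "('a::{ab_group_add,finite} \<Rightarrow> complex) set \<Rightarrow> ('a \<Rightarrow> complex) set" where
  "col_span \<Sigma> = {g. \<exists>c. g = (\<lambda>s. \<Sum>\<sigma>\<in>\<Sigma>. c \<sigma> * fourier s \<sigma>)}"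

definition proj_P :: "('a::{ab_group_add,finite} \<Rightarrow> complex) set \<Rightarrow> ('a \<Rightarrow> complex) \<Rightarrow> ('a \<Rightarrow> complex)" where
  "proj_P \<Sigma> f = (THE g. g \<in> col_span \<Sigma> \<and>
      (\<forall>\<sigma>\<in>\<Sigma>. l2_inner (\<lambda>s. f s - g s) (\<lambda>s. fourier s \<sigma>) = 0))"

definition mult_Q :: "'a set \<Rightarrow> ('a \<Rightarrow> complex) \<Rightarrow> ('a \<Rightarrow> complex)" where
  "mult_Q S f = (\<lambda>s. if s \<in> S then f s else 0)"

end

theory Submission
  imports Defs "Jordan_Normal_Form.Determinant"
begin

text \<open>
  An eigenvector \<open>\<phi>\<^sub>\<nu>\<close> with \<open>\<mu>\<^sub>\<nu> \<noteq> 0\<close> lies in the range of \<open>P\<close>, so it is the combination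
  \<open>\<Sum>\<^sub>\<tau>\<^sub>\<in>\<^sub>\<Sigma> A\<^sub>\<nu>\<^sub>\<tau> F(\<cdot>,\<tau>)\<close> with \<open>A\<^sub>\<nu>\<^sub>\<tau> = F\<phi>\<^sub>\<nu>(\<tau>)\<close>, and \<open>F\<phi>\<^sub>\<nu>\<close> vanishes off \<open>\<Sigma>\<close>.
  Orthonormality of the \<open>\<phi>\<^sub>\<nu>\<close> makes the rows of the square matrix \<open>A\<close> orthonormal, hence
  \<open>A\<close> is unitary. In these coordinates the eigenvalue equation reads
  \<open>diag(\<mu>) A = A M\<close> with \<open>M\<^sub>\<tau>\<^sub>\<sigma> = \<langle>Q F(\<cdot>,\<tau>), F(\<cdot>,\<sigma>)\<rangle>\<close>, so \<open>A\<^sup>* diag(\<mu>) A = M\<close>; the left-hand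
  side of the claim is the diagonal entry \<open>M\<^sub>\<sigma>\<^sub>\<sigma> = |S|/|G|\<close>, because \<open>|F(s,\<sigma>)|\<^sup>2 = 1/|G|\<close>.
\<close>

section \<open>Characters\<close>

lemma character_zero: "character \<chi> \<Longrightarrow> \<chi> 0 = 1"
  unfolding character_def by (metis add_0 mult_cancel_left1 norm_zero zero_neq_one)

lemma character_mult_cnj:
  assumes "character \<chi>"
  shows "\<chi> x * cnj (\<chi> x) = 1"
proof -
  have "cmod (\<chi> x) = 1"
    using assms unfolding character_def by blast
  then show ?thesis
    by (simp flip: complex_norm_square)
qed

lemma character_sum_power:
  assumes "character \<chi>"
  shows "\<chi> (\<Sum>i<k. x) = \<chi> x ^ k"
proof -
  have "\<chi> (a + b) = \<chi> a * \<chi> b" for a b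
    using assms unfolding character_def by blast
  then show ?thesis
    by (induction k) (simp_all add: character_zero[OF assms] mult.commute)
qed

lemma character_root_of_unity:
  fixes \<chi> :: "'a::{ab_group_add,finite} \<Rightarrow> complex"
  assumes "character \<chi>"
  shows "\<exists>k\<in>{1..card (UNIV::'a set)}. \<chi> x ^ k = 1"
proof -
  let ?N = "card (UNIV::'a set)"
  have "\<not> inj_on (\<lambda>k. \<Sum>i<k. x) {0..?N}"
    using card_inj_on_le[of "\<lambda>k. \<Sum>i<k. x" "{0..?N}" UNIV] by auto
  then obtain a b where ab: "a \<le> ?N" "b \<le> ?N" "a \<noteq> b" "(\<Sum>l<a. x) = (\<Sum>l<b. x)"
    unfolding inj_on_def by auto
  define i j where "i = min a b" and "j = max a b"
  have ij: "i < j" "j \<le> ?N" "(\<Sum>l<i. x) = (\<Sum>l<j. x)"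
    using ab unfolding i_def j_def by (auto simp: min_def max_def)
  have "\<chi> x ^ i * \<chi> x ^ (j - i) = \<chi> x ^ j"
    using ij(1) by (simp flip: power_add)
  also have "\<dots> = \<chi> x ^ i"
    using ij(3) by (simp flip: character_sum_power[OF assms])
  finally have "\<chi> x ^ i * \<chi> x ^ (j - i) = \<chi> x ^ i" .
  moreover have "\<chi> x \<noteq> 0"
    using character_mult_cnj[OF assms, of x] by auto
  ultimately show ?thesis
    using ij by (intro bexI[of _ "j - i"]) auto
qed

lemma finite_dual_group: "finite (dual_group :: ('a::{ab_group_add,finite} \<Rightarrow> complex) set)"
proof -
  define R where "R = (\<Union>k\<in>{1..card (UNIV::'a set)}. {z::complex. z ^ k = 1})"
  define F where "F = {f::'a \<Rightarrow> complex. \<forall>x. (x \<in> UNIV \<longrightarrow> f x \<in> R) \<and> (x \<notin> UNIV \<longrightarrow> f x = 0)}"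
  have "finite R"
    unfolding R_def by (auto intro: finite_roots_unity)
  then have "finite F"
    unfolding F_def by (intro finite_set_of_finite_funs) auto
  moreover have "dual_group \<subseteq> F"
  proof
    fix \<chi> :: "'a \<Rightarrow> complex"
    assume "\<chi> \<in> dual_group"
    then have "\<chi> x \<in> R" for x
      using character_root_of_unity[of \<chi> x] unfolding dual_group_def R_def by auto
    then show "\<chi> \<in> F"
      by (simp add: F_def)
  qed
  ultimately show ?thesis
    by (rule finite_subset[rotated])
qed

text \<open>Translating the summation variable by a point \<open>t\<close> with \<open>\<chi> t \<noteq> \<psi> t\<close> multiplies the sum
  by \<open>\<chi> t \<psi> t\<inverse> \<noteq> 1\<close>.\<close>
lemma character_orthogonal:
  fixes \<chi> \<psi> :: "'a::{ab_group_add,finite} \<Rightarrow> complex"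
  assumes \<chi>: "character \<chi>" and \<psi>: "character \<psi>" and "\<chi> \<noteq> \<psi>"
  shows "(\<Sum>s\<in>UNIV. \<chi> s * cnj (\<psi> s)) = 0"
proof -
  obtain t where t: "\<chi> t \<noteq> \<psi> t"
    using \<open>\<chi> \<noteq> \<psi>\<close> by blast
  let ?T = "\<Sum>s\<in>UNIV. \<chi> s * cnj (\<psi> s)"
  have "?T = (\<Sum>s\<in>UNIV. \<chi> (s + t) * cnj (\<psi> (s + t)))"
    by (rule sum.reindex_bij_witness[of _ "\<lambda>s. s + t" "\<lambda>s. s - t"]) auto
  also have "\<dots> = \<chi> t * cnj (\<psi> t) * ?T"
    using \<chi> \<psi> unfolding character_def by (simp add: sum_distrib_left algebra_simps)
  finally have "?T * (1 - \<chi> t * cnj (\<psi> t)) = 0"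
    by (simp add: algebra_simps)
  moreover have "\<chi> t * cnj (\<psi> t) \<noteq> 1"
  proof
    assume "\<chi> t * cnj (\<psi> t) = 1"
    then have "\<chi> t * (cnj (\<psi> t) * \<psi> t) = \<psi> t"
      by (simp add: mult.assoc[symmetric])
    then show False
      using t character_mult_cnj[OF \<psi>, of t] by (simp add: mult.commute)
  qed
  ultimately show ?thesis
    by simp
qed

lemma l2_inner_sum_left:
  "l2_inner (\<lambda>s. \<Sum>\<tau>\<in>T. c \<tau> * g \<tau> s) h = (\<Sum>\<tau>\<in>T. c \<tau> * l2_inner (g \<tau>) h)"
proof -
  have "l2_inner (\<lambda>s. \<Sum>\<tau>\<in>T. c \<tau> * g \<tau> s) h = (\<Sum>s\<in>UNIV. \<Sum>\<tau>\<in>T. c \<tau> * (g \<tau> s * cnj (h s)))"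
    unfolding l2_inner_def by (simp add: sum_distrib_right mult.assoc)
  also have "\<dots> = (\<Sum>\<tau>\<in>T. c \<tau> * l2_inner (g \<tau>) h)"
    unfolding l2_inner_def by (subst sum.swap) (simp add: sum_distrib_left)
  finally show ?thesis .
qed

lemma l2_inner_cnj_swap: "l2_inner f g = cnj (l2_inner g f)"
  unfolding l2_inner_def by (simp add: mult.commute)

lemma l2_inner_diff_left: "l2_inner (\<lambda>s. f s - g s) h = l2_inner f h - l2_inner g h"
  unfolding l2_inner_def by (simp add: sum_subtractf left_diff_distrib)

lemma fourier_transform_eq_l2_inner: "fourier_transform f \<sigma> = l2_inner f (\<lambda>s. fourier s \<sigma>)"
  unfolding fourier_transform_def l2_inner_def ..

lemma fourier_mult_cnj_fourier:
  fixes \<tau> \<tau>' :: "'a::{ab_group_add,finite} \<Rightarrow> complex"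
  shows "fourier s \<tau> * cnj (fourier s \<tau>') = \<tau> s * cnj (\<tau>' s) / of_nat (card (UNIV::'a set))"
proof -
  have sqrt_square: "complex_of_real (sqrt (card (UNIV::'a set))) * complex_of_real (sqrt (card (UNIV::'a set)))
      = of_nat (card (UNIV::'a set))"
    by (simp flip: of_real_mult)
  then show ?thesis
    by (simp add: fourier_def flip: sqrt_square)
qed

lemma fourier_mult_cnj:
  fixes \<sigma> :: "'a::{ab_group_add,finite} \<Rightarrow> complex"
  assumes "\<sigma> \<in> dual_group"
  shows "fourier s \<sigma> * cnj (fourier s \<sigma>) = 1 / of_nat (card (UNIV::'a set))"
  using assms by (simp add: fourier_mult_cnj_fourier character_mult_cnj dual_group_def)

lemma l2_inner_fourier_fourier:
  fixes \<tau> \<tau>' :: "'a::{ab_group_add,finite} \<Rightarrow> complex"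
  assumes "\<tau> \<in> dual_group" "\<tau>' \<in> dual_group"
  shows "l2_inner (\<lambda>s. fourier s \<tau>) (\<lambda>s. fourier s \<tau>') = (if \<tau> = \<tau>' then 1 else 0)"
proof (cases "\<tau> = \<tau>'")
  case True
  then show ?thesis
    using assms by (simp add: l2_inner_def fourier_mult_cnj)
next
  case False
  then have "(\<Sum>s\<in>UNIV. \<tau> s * cnj (\<tau>' s)) = 0"
    using assms character_orthogonal unfolding dual_group_def by blast
  then show ?thesis
    using False by (simp add: l2_inner_def fourier_mult_cnj_fourier flip: sum_divide_distrib)
qed

lemma l2_inner_fourier_combination:
  fixes \<Sigma> :: "('a::{ab_group_add,finite} \<Rightarrow> complex) set"
  assumes "finite \<Sigma>" "\<Sigma> \<subseteq> dual_group" "\<sigma> \<in> dual_group"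
  shows "l2_inner (\<lambda>s. \<Sum>\<tau>\<in>\<Sigma>. c \<tau> * fourier s \<tau>) (\<lambda>s. fourier s \<sigma>) = (if \<sigma> \<in> \<Sigma> then c \<sigma> else 0)"
proof -
  have "l2_inner (\<lambda>s. \<Sum>\<tau>\<in>\<Sigma>. c \<tau> * fourier s \<tau>) (\<lambda>s. fourier s \<sigma>)
      = (\<Sum>\<tau>\<in>\<Sigma>. c \<tau> * (if \<tau> = \<sigma> then 1 else 0))"
    unfolding l2_inner_sum_left
    by (intro sum.cong refl) (use assms in \<open>auto simp: l2_inner_fourier_fourier\<close>)
  then show ?thesis
    using assms(1) by (simp add: if_distrib[of "\<lambda>x. _ * x"] sum.delta' cong: if_cong)
qed

lemma l2_inner_fourier_expansion_left:
  "l2_inner (\<lambda>s. \<Sum>\<tau>\<in>T. c \<tau> * fourier s \<tau>) g = (\<Sum>\<tau>\<in>T. c \<tau> * cnj (fourier_transform g \<tau>))"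
  by (simp add: l2_inner_sum_left fourier_transform_eq_l2_inner l2_inner_cnj_swap[of "\<lambda>s. fourier s _"])

lemma l2_inner_of_fourier_expansion:
  assumes "f = (\<lambda>s. \<Sum>\<tau>\<in>T. fourier_transform f \<tau> * fourier s \<tau>)"
  shows "l2_inner f g = (\<Sum>\<tau>\<in>T. fourier_transform f \<tau> * cnj (fourier_transform g \<tau>))"
  using l2_inner_fourier_expansion_left[of "fourier_transform f" T g] by (simp flip: assms)

lemma proj_P_eq:
  fixes \<Sigma> :: "('a::{ab_group_add,finite} \<Rightarrow> complex) set"
  assumes fin: "finite \<Sigma>" and sub: "\<Sigma> \<subseteq> dual_group"
  shows "proj_P \<Sigma> f = (\<lambda>s. \<Sum>\<tau>\<in>\<Sigma>. fourier_transform f \<tau> * fourier s \<tau>)"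
  unfolding proj_P_def
proof (rule the_equality)
  have "l2_inner (\<lambda>s. \<Sum>\<tau>\<in>\<Sigma>. fourier_transform f \<tau> * fourier s \<tau>) (\<lambda>s. fourier s \<sigma>)
      = l2_inner f (\<lambda>s. fourier s \<sigma>)" if "\<sigma> \<in> \<Sigma>" for \<sigma>
    using that sub l2_inner_fourier_combination[OF fin sub]
    by (auto simp: fourier_transform_eq_l2_inner)
  then show "(\<lambda>s. \<Sum>\<tau>\<in>\<Sigma>. fourier_transform f \<tau> * fourier s \<tau>) \<in> col_span \<Sigma> \<and>
      (\<forall>\<sigma>\<in>\<Sigma>. l2_inner (\<lambda>s. f s - (\<Sum>\<tau>\<in>\<Sigma>. fourier_transform f \<tau> * fourier s \<tau>)) (\<lambda>s. fourier s \<sigma>) = 0)"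
    by (auto simp: col_span_def l2_inner_diff_left)
next
  fix g
  assume g: "g \<in> col_span \<Sigma> \<and> (\<forall>\<sigma>\<in>\<Sigma>. l2_inner (\<lambda>s. f s - g s) (\<lambda>s. fourier s \<sigma>) = 0)"
  then obtain c where c: "g = (\<lambda>s. \<Sum>\<tau>\<in>\<Sigma>. c \<tau> * fourier s \<tau>)"
    unfolding col_span_def by blast
  have "fourier_transform f \<sigma> = c \<sigma>" if "\<sigma> \<in> \<Sigma>" for \<sigma>
    using g that sub l2_inner_fourier_combination[OF fin sub, of \<sigma> c]
    by (auto simp: c l2_inner_diff_left fourier_transform_eq_l2_inner)
  then show "g = (\<lambda>s. \<Sum>\<tau>\<in>\<Sigma>. fourier_transform f \<tau> * fourier s \<tau>)"
    unfolding c by (intro ext sum.cong) auto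
qed

lemma fourier_transform_proj_P:
  fixes \<Sigma> :: "('a::{ab_group_add,finite} \<Rightarrow> complex) set"
  assumes "finite \<Sigma>" "\<Sigma> \<subseteq> dual_group" "\<sigma> \<in> dual_group"
  shows "fourier_transform (proj_P \<Sigma> f) \<sigma> = (if \<sigma> \<in> \<Sigma> then fourier_transform f \<sigma> else 0)"
  using l2_inner_fourier_combination[OF assms]
  by (simp add: proj_P_eq[OF assms(1,2)] fourier_transform_eq_l2_inner)

lemma mult_Q_fourier_combination:
  "mult_Q S (\<lambda>s. \<Sum>\<tau>\<in>T. c \<tau> * fourier s \<tau>) = (\<lambda>s. \<Sum>\<tau>\<in>T. c \<tau> * mult_Q S (\<lambda>s. fourier s \<tau>) s)"
  by (auto simp: mult_Q_def)

lemma l2_inner_mult_Q_fourier_self: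
  fixes S :: "'a::{ab_group_add,finite} set"
  assumes "\<sigma> \<in> dual_group"
  shows "l2_inner (mult_Q S (\<lambda>s. fourier s \<sigma>)) (\<lambda>s. fourier s \<sigma>) = of_nat (card S) / of_nat (card (UNIV::'a set))"
proof -
  have "l2_inner (mult_Q S (\<lambda>s. fourier s \<sigma>)) (\<lambda>s. fourier s \<sigma>)
      = (\<Sum>s\<in>UNIV. if s \<in> S then 1 / of_nat (card (UNIV::'a set)) else 0)"
    unfolding l2_inner_def mult_Q_def by (intro sum.cong refl) (simp add: fourier_mult_cnj[OF assms])
  also have "\<dots> = (\<Sum>s\<in>S. 1 / of_nat (card (UNIV::'a set)))"
    by (simp add: sum.If_cases)
  finally show ?thesis
    by simp
qed

section \<open>Eigenvectors of \<open>PQ\<close>\<close>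

context
  fixes \<Sigma> :: "('a::{ab_group_add,finite} \<Rightarrow> complex) set" and S :: "'a set"
    and \<phi> :: "'a \<Rightarrow> complex" and \<mu> :: complex
  assumes fin: "finite \<Sigma>" and sub: "\<Sigma> \<subseteq> dual_group"
    and eigen: "proj_P \<Sigma> (mult_Q S \<phi>) = (\<lambda>s. \<mu> * \<phi> s)"
begin

lemma eigenvector_fourier_transform:
  assumes "\<sigma> \<in> dual_group"
  shows "\<mu> * fourier_transform \<phi> \<sigma> = (if \<sigma> \<in> \<Sigma> then fourier_transform (mult_Q S \<phi>) \<sigma> else 0)"
proof -
  have "\<mu> * fourier_transform \<phi> \<sigma> = fourier_transform (proj_P \<Sigma> (mult_Q S \<phi>)) \<sigma>"
    unfolding eigen fourier_transform_def by (simp add: sum_distrib_left mult.assoc)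
  then show ?thesis
    using fourier_transform_proj_P[OF fin sub assms] by simp
qed

lemma eigenvector_fourier_expansion:
  assumes "\<mu> \<noteq> 0"
  shows "\<phi> = (\<lambda>s. \<Sum>\<tau>\<in>\<Sigma>. fourier_transform \<phi> \<tau> * fourier s \<tau>)"
proof
  fix s
  have "\<mu> * \<phi> s = (\<Sum>\<tau>\<in>\<Sigma>. fourier_transform (mult_Q S \<phi>) \<tau> * fourier s \<tau>)"
    using fun_cong[OF eigen, of s] by (simp add: proj_P_eq[OF fin sub])
  also have "\<dots> = \<mu> * (\<Sum>\<tau>\<in>\<Sigma>. fourier_transform \<phi> \<tau> * fourier s \<tau>)"
    using sub eigenvector_fourier_transform
    by (auto simp: sum_distrib_left mult.assoc intro!: sum.cong)
  finally show "\<phi> s = (\<Sum>\<tau>\<in>\<Sigma>. fourier_transform \<phi> \<tau> * fourier s \<tau>)"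
    using assms by simp
qed

lemma eigenvector_fourier_equation:
  assumes "\<mu> \<noteq> 0" "\<sigma> \<in> \<Sigma>"
  shows "\<mu> * fourier_transform \<phi> \<sigma> =
    (\<Sum>\<tau>\<in>\<Sigma>. fourier_transform \<phi> \<tau> * l2_inner (mult_Q S (\<lambda>s. fourier s \<tau>)) (\<lambda>s. fourier s \<sigma>))"
proof -
  have "\<mu> * fourier_transform \<phi> \<sigma> = fourier_transform (mult_Q S \<phi>) \<sigma>"
    using assms(2) sub eigenvector_fourier_transform by auto
  also have "\<dots> = (\<Sum>\<tau>\<in>\<Sigma>. fourier_transform \<phi> \<tau> * l2_inner (mult_Q S (\<lambda>s. fourier s \<tau>)) (\<lambda>s. fourier s \<sigma>))"
    by (subst eigenvector_fourier_expansion[OF assms(1)])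
      (simp add: fourier_transform_eq_l2_inner mult_Q_fourier_combination l2_inner_sum_left)
  finally show ?thesis .
qed

end

section \<open>Unitary matrices\<close>

text \<open>A one-sided inverse of a square matrix is two-sided.\<close>
lemma orthonormal_columns_if_orthonormal_rows:
  fixes A :: "'i \<Rightarrow> 't \<Rightarrow> complex"
  assumes "finite I" "finite T" "card I = card T"
    and rows: "\<And>\<nu> \<nu>'. \<nu> \<in> I \<Longrightarrow> \<nu>' \<in> I \<Longrightarrow>
      (\<Sum>\<tau>\<in>T. A \<nu> \<tau> * cnj (A \<nu>' \<tau>)) = (if \<nu> = \<nu>' then 1 else 0)"
    and "\<tau> \<in> T" "\<tau>' \<in> T"
  shows "(\<Sum>\<nu>\<in>I. A \<nu> \<tau> * cnj (A \<nu> \<tau>')) = (if \<tau> = \<tau>' then 1 else 0)"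
proof -
  let ?n = "card T"
  obtain g where g: "bij_betw g {0..<?n} I"
    using ex_bij_betw_nat_finite[OF assms(1)] assms(3) by auto
  obtain h where h: "bij_betw h {0..<?n} T"
    using ex_bij_betw_nat_finite[OF assms(2)] by auto
  define Am where "Am = mat ?n ?n (\<lambda>(i, j). A (g i) (h j))"
  define Bm where "Bm = mat ?n ?n (\<lambda>(i, j). cnj (A (g j) (h i)))"
  have Am: "Am \<in> carrier_mat ?n ?n" and Bm: "Bm \<in> carrier_mat ?n ?n"
    unfolding Am_def Bm_def by auto
  have "Am * Bm = 1\<^sub>m ?n"
  proof (rule eq_matI)
    fix i k
    assume "i < dim_row (1\<^sub>m ?n)" "k < dim_col (1\<^sub>m ?n)"
    then have i: "i < ?n" and k: "k < ?n"
      by simp_all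
    have "(Am * Bm) $$ (i, k) = (\<Sum>j\<in>{0..<?n}. A (g i) (h j) * cnj (A (g k) (h j)))"
      using i k unfolding Am_def Bm_def by (simp add: scalar_prod_def)
    also have "\<dots> = (\<Sum>\<tau>\<in>T. A (g i) \<tau> * cnj (A (g k) \<tau>))"
      by (rule sum.reindex_bij_betw[OF h])
    also have "\<dots> = (if g i = g k then 1 else 0)"
      using g i k by (intro rows) (auto simp: bij_betw_def)
    also have "\<dots> = 1\<^sub>m ?n $$ (i, k)"
      using g i k by (auto simp: bij_betw_def inj_on_def)
    finally show "(Am * Bm) $$ (i, k) = 1\<^sub>m ?n $$ (i, k)" .
  qed (auto simp: Am_def Bm_def)
  then have BA: "Bm * Am = 1\<^sub>m ?n"
    by (rule mat_mult_left_right_inverse[OF Am Bm])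
  have "\<tau> \<in> h ` {0..<?n}" "\<tau>' \<in> h ` {0..<?n}"
    using h \<open>\<tau> \<in> T\<close> \<open>\<tau>' \<in> T\<close> by (simp_all add: bij_betw_def)
  then obtain j l where j: "j < ?n" "h j = \<tau>'" and l: "l < ?n" "h l = \<tau>"
    by auto
  have "(j = l) = (\<tau> = \<tau>')"
    using h j l by (auto simp: bij_betw_def inj_on_def)
  have "(\<Sum>\<nu>\<in>I. A \<nu> \<tau> * cnj (A \<nu> \<tau>')) = (\<Sum>i\<in>{0..<?n}. A (g i) \<tau> * cnj (A (g i) \<tau>'))"
    by (rule sum.reindex_bij_betw[OF g, symmetric])
  also have "\<dots> = (\<Sum>i\<in>{0..<?n}. cnj (A (g i) \<tau>') * A (g i) \<tau>)"
    by (intro sum.cong refl) (rule mult.commute)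
  also have "\<dots> = (Bm * Am) $$ (j, l)"
    using j l unfolding Am_def Bm_def by (simp add: scalar_prod_def)
  also have "\<dots> = (if \<tau> = \<tau>' then 1 else 0)"
    using j l \<open>(j = l) = (\<tau> = \<tau>')\<close> by (simp add: BA)
  finally show ?thesis .
qed

lemma diagonal_entry_eq_eigenvalue_weighted_sum:
  fixes A :: "'i \<Rightarrow> 't \<Rightarrow> complex" and M :: "'t \<Rightarrow> 't \<Rightarrow> complex" and \<mu> :: "'i \<Rightarrow> real"
  assumes "finite T" "\<sigma> \<in> T"
    and eigen: "\<And>\<nu>. \<nu> \<in> I \<Longrightarrow> of_real (\<mu> \<nu>) * A \<nu> \<sigma> = (\<Sum>\<tau>\<in>T. A \<nu> \<tau> * M \<tau> \<sigma>)"
    and columns: "\<And>\<tau>. \<tau> \<in> T \<Longrightarrow> (\<Sum>\<nu>\<in>I. A \<nu> \<tau> * cnj (A \<nu> \<sigma>)) = (if \<tau> = \<sigma> then 1 else 0)"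
  shows "of_real (\<Sum>\<nu>\<in>I. \<mu> \<nu> * (cmod (A \<nu> \<sigma>))\<^sup>2) = M \<sigma> \<sigma>"
proof -
  have "of_real (\<Sum>\<nu>\<in>I. \<mu> \<nu> * (cmod (A \<nu> \<sigma>))\<^sup>2) = (\<Sum>\<nu>\<in>I. of_real (\<mu> \<nu>) * A \<nu> \<sigma> * cnj (A \<nu> \<sigma>))"
    unfolding of_real_sum by (intro sum.cong refl) (simp only: of_real_mult complex_norm_square mult.assoc)
  also have "\<dots> = (\<Sum>\<nu>\<in>I. (\<Sum>\<tau>\<in>T. A \<nu> \<tau> * M \<tau> \<sigma>) * cnj (A \<nu> \<sigma>))"
    using eigen by (intro sum.cong refl) simp
  also have "\<dots> = (\<Sum>\<tau>\<in>T. M \<tau> \<sigma> * (\<Sum>\<nu>\<in>I. A \<nu> \<tau> * cnj (A \<nu> \<sigma>)))"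
    by (simp add: sum_distrib_right sum_distrib_left mult_ac sum.swap[of _ I T])
  also have "\<dots> = M \<sigma> \<sigma>"
    using assms(1,2) columns by (simp add: if_distrib[of "\<lambda>x. _ * x"] sum.delta' cong: if_cong)
  finally show ?thesis .
qed

theorem proposition1:
  fixes S :: "'a::{ab_group_add,finite} set"
    and \<Sigma> :: "('a \<Rightarrow> complex) set"
    and \<mu> :: "nat \<Rightarrow> real"
    and \<phi> :: "nat \<Rightarrow> 'a \<Rightarrow> complex"
    and \<sigma> :: "'a \<Rightarrow> complex"
  assumes S_sym: "uminus ` S = S"
    and Sigma_sub: "\<Sigma> \<subseteq> dual_group"
    and Sigma_sym: "dual_inv ` \<Sigma> = \<Sigma>"
    and card_le: "card \<Sigma> \<le> card S"
    and mu_mono: "\<And>i j. 1 \<le> i \<Longrightarrow> i \<le> j \<Longrightarrow> j \<le> card \<Sigma> \<Longrightarrow> \<mu> j \<le> \<mu> i"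
    and mu_nz: "\<And>\<nu>. \<nu> \<in> {1..card \<Sigma>} \<Longrightarrow> \<mu> \<nu> \<noteq> 0"
    and eigen: "\<And>\<nu>. \<nu> \<in> {1..card \<Sigma>} \<Longrightarrow>
        proj_P \<Sigma> (mult_Q S (\<phi> \<nu>)) = (\<lambda>s. complex_of_real (\<mu> \<nu>) * \<phi> \<nu> s)"
    and orthonormal: "\<And>\<nu> \<nu>'. \<nu> \<in> {1..card \<Sigma>} \<Longrightarrow> \<nu>' \<in> {1..card \<Sigma>} \<Longrightarrow>
        l2_inner (\<phi> \<nu>) (\<phi> \<nu>') = (if \<nu> = \<nu>' then 1 else 0)"
    and sigma_dual: "\<sigma> \<in> dual_group"
  shows "(\<Sum>\<nu>\<in>{1..card \<Sigma>}. \<mu> \<nu> * (cmod (fourier_transform (\<phi> \<nu>) \<sigma>))\<^sup>2)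
         = real (card S) / real (card (UNIV::'a set)) * (if \<sigma> \<in> \<Sigma> then 1 else 0)"
proof -
  let ?I = "{1..card \<Sigma>}"
  let ?A = "\<lambda>\<nu>. fourier_transform (\<phi> \<nu>)"
  let ?M = "\<lambda>\<tau> \<sigma>'. l2_inner (mult_Q S (\<lambda>s. fourier s \<tau>)) (\<lambda>s. fourier s \<sigma>')"
  have fin: "finite \<Sigma>"
    using Sigma_sub finite_dual_group by (rule finite_subset)
  have mu_nz': "complex_of_real (\<mu> \<nu>) \<noteq> 0" if "\<nu> \<in> ?I" for \<nu>
    using mu_nz[OF that] by simp
  have rows: "(\<Sum>\<tau>\<in>\<Sigma>. ?A \<nu> \<tau> * cnj (?A \<nu>' \<tau>)) = (if \<nu> = \<nu>' then 1 else 0)"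
    if "\<nu> \<in> ?I" "\<nu>' \<in> ?I" for \<nu> \<nu>'
    using orthonormal[OF that] l2_inner_of_fourier_expansion[OF eigenvector_fourier_expansion,
        OF fin Sigma_sub eigen[OF that(1)] mu_nz'[OF that(1)], of "\<phi> \<nu>'"]
    by simp
  have columns: "(\<Sum>\<nu>\<in>?I. ?A \<nu> \<tau> * cnj (?A \<nu> \<tau>')) = (if \<tau> = \<tau>' then 1 else 0)"
    if "\<tau> \<in> \<Sigma>" "\<tau>' \<in> \<Sigma>" for \<tau> \<tau>'
    by (rule orthonormal_columns_if_orthonormal_rows[OF _ fin _ rows that]) simp_all
  show ?thesis
  proof (cases "\<sigma> \<in> \<Sigma>")
    case True
    have "complex_of_real (\<mu> \<nu>) * ?A \<nu> \<sigma> = (\<Sum>\<tau>\<in>\<Sigma>. ?A \<nu> \<tau> * ?M \<tau> \<sigma>)" if "\<nu> \<in> ?I" for \<nu>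
      by (rule eigenvector_fourier_equation[OF fin Sigma_sub eigen[OF that] mu_nz'[OF that] True])
    then have "complex_of_real (\<Sum>\<nu>\<in>?I. \<mu> \<nu> * (cmod (?A \<nu> \<sigma>))\<^sup>2) = ?M \<sigma> \<sigma>"
      by (rule diagonal_entry_eq_eigenvalue_weighted_sum[where A = ?A and M = ?M,
            OF fin True _ columns[OF _ True]])
    also have "\<dots> = complex_of_real (real (card S) / real (card (UNIV::'a set)))"
      by (simp add: l2_inner_mult_Q_fourier_self[OF sigma_dual])
    finally show ?thesis
      using True by (simp only: of_real_eq_iff) simp
  next
    case False
    have "?A \<nu> \<sigma> = 0" if "\<nu> \<in> ?I" for \<nu>
      using eigenvector_fourier_transform[OF fin Sigma_sub eigen[OF that] sigma_dual] mu_nz'[OF that] False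
      by simp
    then show ?thesis
      using False by simp
  qed
qed

end
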